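(* Let $k\geq 2$ and let $(\Sigma_k,\sigma)$ be the full one-sided shift on $k$ symbols. Then the set $Rec(\Sigma_k)\setminus BR(\Sigma_k)$ is dense in $\Sigma_k$ and contains an uncountable DC1-scrambled subset.
   Context: $\Sigma_k=\{0,1,\dots,k-1\}^{\mathbb{N}}$ with metric $d(x,y)=\sum_{n\ge1}\delta(x_n,y_n)/2^n$ (where $\delta(a,b)=0$ if $a=b$ and $1$ otherwise) and shift $\sigma(x_1x_2x_3\dots)=(x_2x_3\dots)$. For a point $x$ and open set $U$, $N(x,U)=\{n\ge1: \sigma^n(x)\in U\}$; $B_\varepsilon(x)$ is the open $\varepsilon$-ball. For $S\subseteq\mathbb{N}$, the Banach upper density is $B^*(S)=\limsup_{|I|\to\infty}|S\cap I|/|I|$ over finite intervals of consecutive integers $I$. A point $x$ is recurrent ($x\in Rec$) if $N(x,B_\varepsilon(x))\neq\emptyset$ for every $\varepsilon>0$, and Banach recurrent ($x\in BR$) if $B^*(N(x,B_\varepsilon(x)))>0$ for every $\varepsilon>0$. For $x,y$ and $t\in\mathbb{R}$, $\Phi^{(n)}_{xy}(t)=\frac1n|\{0\le i<n: d(\sigma^i x,\sigma^i y)<t\}|$, $\Phi_{xy}=\liminf_n\Phi^{(n)}_{xy}$, $\Phi^*_{xy}=\limsup_n\Phi^{(n)}_{xy}$. A pair $(x,y)$ is DC1 if $\Phi_{xy}(s)=0$ for some $s>0$ and $\Phi^*_{xy}(t)=1$ for all $t>0$; a set with at least two points is DC1-scrambled if every pair of distinct points in it is DC1. *)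

theory Defs
  imports "HOL-Analysis.Analysis"
begin

text \<open>Points of the shift space are sequences indexed from 0: the paper's
  x_1 x_2 x_3 ... is represented by x 0, x 1, x 2, ...\<close>

definition shift_space :: "nat \<Rightarrow> (nat \<Rightarrow> nat) set" where
  "shift_space k = {x. \<forall>n. x n < k}"

definition sdist :: "(nat \<Rightarrow> nat) \<Rightarrow> (nat \<Rightarrow> nat) \<Rightarrow> real" where
  "sdist x y = (\<Sum>n. (if x n = y n then 0 else 1) / 2 ^ (Suc n))"

definition shift :: "(nat \<Rightarrow> nat) \<Rightarrow> (nat \<Rightarrow> nat)" where
  "shift x = (\<lambda>n. x (Suc n))"

definition sball :: "nat \<Rightarrow> (nat \<Rightarrow> nat) \<Rightarrow> real \<Rightarrow> (nat \<Rightarrow> nat) set" where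
  "sball k x e = {y \<in> shift_space k. sdist x y < e}"

definition hitting_times :: "(nat \<Rightarrow> nat) \<Rightarrow> (nat \<Rightarrow> nat) set \<Rightarrow> nat set" where
  "hitting_times x U = {n. n \<ge> 1 \<and> (shift ^^ n) x \<in> U}"

definition banach_upper_density :: "nat set \<Rightarrow> real" where
  "banach_upper_density S =
     (INF M::nat. SUP p \<in> {(a::nat, m::nat). m \<ge> M \<and> m > 0}.
        real (card (S \<inter> {fst p..<fst p + snd p})) / real (snd p))"

definition Rec :: "nat \<Rightarrow> (nat \<Rightarrow> nat) set" where
  "Rec k = {x \<in> shift_space k. \<forall>e>0. hitting_times x (sball k x e) \<noteq> {}}"

definition BR :: "nat \<Rightarrow> (nat \<Rightarrow> nat) set" where
  "BR k = {x \<in> shift_space k. \<forall>e>0. banach_upper_density (hitting_times x (sball k x e)) > 0}"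

definition Phi_n :: "(nat \<Rightarrow> nat) \<Rightarrow> (nat \<Rightarrow> nat) \<Rightarrow> nat \<Rightarrow> real \<Rightarrow> real" where
  "Phi_n x y n t = real (card {i. i < n \<and> sdist ((shift ^^ i) x) ((shift ^^ i) y) < t}) / real n"

definition Phi_lower :: "(nat \<Rightarrow> nat) \<Rightarrow> (nat \<Rightarrow> nat) \<Rightarrow> real \<Rightarrow> ereal" where
  "Phi_lower x y t = liminf (\<lambda>n. ereal (Phi_n x y n t))"

definition Phi_upper :: "(nat \<Rightarrow> nat) \<Rightarrow> (nat \<Rightarrow> nat) \<Rightarrow> real \<Rightarrow> ereal" where
  "Phi_upper x y t = limsup (\<lambda>n. ereal (Phi_n x y n t))"

definition DC1_pair :: "(nat \<Rightarrow> nat) \<Rightarrow> (nat \<Rightarrow> nat) \<Rightarrow> bool" where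
  "DC1_pair x y \<longleftrightarrow> (\<exists>s>0. Phi_lower x y s = 0) \<and> (\<forall>t>0. Phi_upper x y t = 1)"

definition DC1_scrambled :: "(nat \<Rightarrow> nat) set \<Rightarrow> bool" where
  "DC1_scrambled S \<longleftrightarrow> (\<exists>x\<in>S. \<exists>y\<in>S. x \<noteq> y) \<and>
     (\<forall>x\<in>S. \<forall>y\<in>S. x \<noteq> y \<longrightarrow> DC1_pair x y)"

end

theory Submission
  imports Defs "HOL-Library.Discrete_Functions"
begin

(* The witnesses are points x = toeplitz_point w z made of blocks of length A = 2 |w| + 2.
  Block q is w followed by zeros if the ternary expansion of q has no digit 2 (a Cantor
  block); otherwise, if h is the position of its leading digit 2, the block alternates a
  symbol b_h (even positions) with 1 (odd positions).  Adding 3^j to a block index below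
  3^j keeps the position of its leading digit 2, so x (p + A 3^j) = x p for p < A 3^j:
  every prefix of x recurs, and x starts with w.  A return closer than 2^-(|w|+2)
  reproduces the two zeros after w, one of them at an odd position, hence inside a Cantor
  block; since at most 2 * 2^r of any 3^r consecutive block indices avoid the digit 2,
  the return times have Banach density zero.

  The symbols b_h = level_bit z (floor_log h) only depend on the dyadic level of h.  Up to
  time A 3^(2^(m+1)) all but a fraction (2/3)^(2^m) of positions lie in blocks of level m,
  so two such points disagree at almost all even positions before that time if their
  level-m bits differ, and agree almost everywhere if these bits coincide.  Odd levels
  encode every bit of z infinitely often and even levels are 0, so distinct z, z' give a
  DC1 pair, and z ranges over the uncountable set of binary sequences. *)

section \<open>The cylinder distance\<close>

lemma sdist_summable: "summable (\<lambda>n. (if x n = y n then 0 else 1) / (2::real) ^ Suc n)"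
proof (rule summable_comparison_test[where g="\<lambda>n. (1/2::real) ^ Suc n"])
  show "\<exists>N. \<forall>n\<ge>N. norm ((if x n = y n then 0 else 1) / (2::real) ^ Suc n) \<le> (1/2) ^ Suc n"
    by (auto simp: power_one_over)
  show "summable (\<lambda>n. (1/2::real) ^ Suc n)"
    using summable_geometric[of "1/2::real"] by (simp add: summable_mult)
qed

lemma sdist_less_imp_eq:
  assumes "sdist x y < 1 / 2 ^ m" "l < m" shows "x l = y l"
proof (rule ccontr)
  assume "x l \<noteq> y l"
  then have "1 / 2 ^ Suc l \<le> sdist x y"
    unfolding sdist_def using sum_le_suminf[OF sdist_summable[of x y], of "{l}"] by auto
  moreover have "(1::real) / 2 ^ m \<le> 1 / 2 ^ Suc l"
    using assms(2) by (intro divide_left_mono power_increasing) auto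
  ultimately show False using assms(1) by simp
qed

lemma sdist_le_if_eq:
  assumes "\<And>l. l < m \<Longrightarrow> x l = y l" shows "sdist x y \<le> 1 / 2 ^ m"
proof -
  let ?f = "\<lambda>n. (if x n = y n then 0 else 1) / (2::real) ^ Suc n"
  have "sdist x y = (\<Sum>n. ?f (n + m)) + (\<Sum>i<m. ?f i)"
    unfolding sdist_def using suminf_split_initial_segment[OF sdist_summable, where k=m] by simp
  also have "(\<Sum>i<m. ?f i) = 0" using assms by simp
  also have "(\<Sum>n. ?f (n + m)) \<le> (\<Sum>n. (1/2::real) ^ Suc (n + m))"
  proof (rule suminf_le)
    show "summable (\<lambda>n. ?f (n + m))"
      using summable_ignore_initial_segment[OF sdist_summable] by simp
    show "summable (\<lambda>n. (1/2::real) ^ Suc (n + m))"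
      using summable_mult2[OF summable_geometric[of "1/2::real"], of "(1/2)^Suc m"]
      by (simp add: power_add mult_ac)
  qed (auto simp: power_one_over)
  also have "(\<Sum>n. (1/2::real) ^ Suc (n + m)) = (1/2)^m * (1/2) * (\<Sum>n. (1/2)^n)"
    by (subst suminf_mult[symmetric]) (auto simp: power_add mult_ac summable_geometric)
  also have "\<dots> = (1/2)^m" by (simp add: suminf_geometric)
  finally show ?thesis by (simp add: power_one_over)
qed

lemma funpow_shift: "(shift ^^ n) x = (\<lambda>i. x (i + n))"
  by (induction n) (auto simp: shift_def)

lemma sdist_funpow_shift_less_imp_eq:
  "sdist ((shift ^^ i) x) ((shift ^^ i) y) < 1 / 2 ^ m \<Longrightarrow> l < m \<Longrightarrow> x (l + i) = y (l + i)"
  using sdist_less_imp_eq[of "(shift ^^ i) x" "(shift ^^ i) y" m l] by (simp add: funpow_shift)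

lemma sdist_funpow_shift_le_if_eq:
  "(\<And>l. l < m \<Longrightarrow> x (l + i) = y (l + i)) \<Longrightarrow> sdist ((shift ^^ i) x) ((shift ^^ i) y) \<le> 1 / 2 ^ m"
  by (rule sdist_le_if_eq) (simp add: funpow_shift)

lemma ex_inverse_pow2_less: "(e::real) > 0 \<Longrightarrow> \<exists>m. 1 / 2 ^ m < e"
  using real_arch_pow_inv[of e "1/2"] by (auto simp: power_one_over)

section \<open>The leading ternary digit 2\<close>

fun top_two :: "nat \<Rightarrow> nat option" where
  "top_two q = (if q = 0 then None else
     (case top_two (q div 3) of
        Some h \<Rightarrow> Some (Suc h)
      | None \<Rightarrow> if q mod 3 = 2 then Some 0 else None))"

declare top_two.simps[simp del]

lemma top_two_0 [simp]: "top_two 0 = None"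
  by (simp add: top_two.simps)

lemma top_two_digit: "t < 3 \<Longrightarrow> top_two t = (if t = 2 then Some 0 else None)"
  by (subst top_two.simps) auto

lemma top_two_append_digits:
  assumes "q < 3 ^ r"
  shows "top_two (s * 3 ^ r + q) = (case top_two s of Some h \<Rightarrow> Some (h + r) | None \<Rightarrow> top_two q)"
  using assms
proof (induction r arbitrary: q)
  case 0
  then show ?case by (cases "top_two s") auto
next
  case (Suc r)
  have div3: "(s * 3 ^ Suc r + q) div 3 = s * 3 ^ r + q div 3" by simp
  have "s * 3 ^ Suc r + q = q + s * 3 ^ r * 3" by simp
  then have mod3: "(s * 3 ^ Suc r + q) mod 3 = q mod 3" by (metis mod_mult_self1)
  have IH: "top_two (s * 3 ^ r + q div 3) =
      (case top_two s of Some h \<Rightarrow> Some (h + r) | None \<Rightarrow> top_two (q div 3))"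
    using Suc by simp
  show ?case
  proof (cases "top_two s")
    case None
    show ?thesis
    proof (cases "s * 3 ^ Suc r + q = 0")
      case False
      then have "top_two (s * 3 ^ Suc r + q) = (case top_two (q div 3) of Some h \<Rightarrow> Some (Suc h)
          | None \<Rightarrow> if q mod 3 = 2 then Some 0 else None)"
        using IH None by (subst top_two.simps) (simp only: div3 mod3 if_False option.case)
      also have "\<dots> = top_two q"
        by (cases "q = 0") (simp_all add: top_two.simps[of q])
      finally show ?thesis using None by simp
    qed (use None in simp)
  next
    case (Some h)
    then have "s * 3 ^ Suc r + q \<noteq> 0" by (cases "s = 0") auto
    then have "top_two (s * 3 ^ Suc r + q) = (case top_two (s * 3 ^ r + q div 3) of
        Some h \<Rightarrow> Some (Suc h) | None \<Rightarrow> if q mod 3 = 2 then Some 0 else None)"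
      by (subst top_two.simps) (simp only: div3 mod3 if_False)
    then show ?thesis using IH Some by simp
  qed
qed

lemma top_two_leading_digit:
  "q < 3 ^ r \<Longrightarrow> t < 3 \<Longrightarrow> top_two (t * 3 ^ r + q) = (if t = 2 then Some r else top_two q)"
  using top_two_append_digits[of q r t] top_two_digit[of t] by auto

definition avoid_two :: "nat \<Rightarrow> nat \<Rightarrow> nat set" where
  "avoid_two j J = {q. q < 3 ^ J \<and> (\<forall>h. top_two q = Some h \<longrightarrow> h < j \<or> J \<le> h)}"

lemma finite_avoid_two [simp]: "finite (avoid_two j J)"
  by (simp add: avoid_two_def)

lemma card_avoid_two: "j \<le> J \<Longrightarrow> card (avoid_two j J) \<le> 3 ^ j * 2 ^ (J - j)"
proof (induction J rule: dec_induct)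
  case base
  have "card (avoid_two j j) \<le> card {..<(3::nat) ^ j}"
    by (rule card_mono) (auto simp: avoid_two_def)
  then show ?case by simp
next
  case (step J)
  have "avoid_two j (Suc J) \<subseteq> (\<lambda>(t, q). t * 3 ^ J + q) ` ({0, 1} \<times> avoid_two j J)"
  proof
    fix p assume p: "p \<in> avoid_two j (Suc J)"
    define t where "t = p div 3 ^ J"
    define q where "q = p mod 3 ^ J"
    have p_eq: "p = t * 3 ^ J + q" using div_mult_mod_eq[of p "3 ^ J"] by (simp add: t_def q_def)
    have "t < 3" using p by (auto simp: avoid_two_def t_def less_mult_imp_div_less)
    moreover have "q < 3 ^ J" by (simp add: q_def)
    ultimately have top: "top_two p = (if t = 2 then Some J else top_two q)"
      using top_two_leading_digit p_eq by simp
    then have "t \<noteq> 2" using p step.hyps by (auto simp: avoid_two_def)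
    then have "(t, q) \<in> {0, 1} \<times> avoid_two j J"
      using p top \<open>t < 3\<close> \<open>q < 3 ^ J\<close> by (auto simp: avoid_two_def)
    then show "p \<in> (\<lambda>(t, q). t * 3 ^ J + q) ` ({0, 1} \<times> avoid_two j J)"
      using p_eq by force
  qed
  then have "card (avoid_two j (Suc J)) \<le> card ({0::nat, 1} \<times> avoid_two j J)"
    by (rule surj_card_le[rotated]) auto
  also have "\<dots> = 2 * card (avoid_two j J)" by (simp add: card_cartesian_product)
  also have "\<dots> \<le> 3 ^ j * 2 ^ (Suc J - j)" using step by (simp add: Suc_diff_le)
  finally show ?case .
qed

lemma div_add_le: "(b::nat) > 0 \<Longrightarrow> (x + y) div b \<le> x div b + y div b + 1"
proof -
  assume b: "b > 0"
  have "x mod b + y mod b < 2 * b" using b by (simp add: mult_2 add_strict_mono)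
  then have "(x mod b + y mod b) div b < 2" by (rule less_mult_imp_div_less)
  then show ?thesis by (simp add: div_add1_eq[of x y])
qed

lemma card_top_two_None_interval:
  "card {q \<in> {u..<u + K}. top_two q = None} \<le> (K div 3 ^ r + 2) * 2 ^ r"
proof -
  let ?I = "{u div 3 ^ r .. (u + K) div 3 ^ r}" and ?C = "avoid_two 0 r"
  have "{q \<in> {u..<u + K}. top_two q = None} \<subseteq> (\<lambda>(s, q). s * 3 ^ r + q) ` (?I \<times> ?C)"
  proof
    fix p assume p: "p \<in> {q \<in> {u..<u + K}. top_two q = None}"
    define s where "s = p div 3 ^ r"
    define q where "q = p mod 3 ^ r"
    have p_eq: "p = s * 3 ^ r + q" using div_mult_mod_eq[of p "3 ^ r"] by (simp add: s_def q_def)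
    have "q < 3 ^ r" by (simp add: q_def)
    then have "top_two q = None"
      using p top_two_append_digits[of q r s] p_eq by (cases "top_two s") auto
    then have "q \<in> ?C" using \<open>q < 3 ^ r\<close> by (simp add: avoid_two_def)
    moreover have "s \<in> ?I" using p by (auto simp: s_def div_le_mono)
    ultimately show "p \<in> (\<lambda>(s, q). s * 3 ^ r + q) ` (?I \<times> ?C)" using p_eq by force
  qed
  then have "card {q \<in> {u..<u + K}. top_two q = None} \<le> card (?I \<times> ?C)"
    by (rule surj_card_le[rotated]) auto
  also have "\<dots> = card ?I * card ?C" by (simp add: card_cartesian_product)
  also have "\<dots> \<le> (K div 3 ^ r + 2) * 2 ^ r"
  proof (rule mult_mono)
    show "card ?I \<le> K div 3 ^ r + 2" using div_add_le[of "3 ^ r" u K] by simp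
    show "card ?C \<le> 2 ^ r" using card_avoid_two[of 0 r] by simp
  qed auto
  finally show ?thesis .
qed

lemma card_top_two_None_blocks:
  assumes "A > 0"
  shows "card ({n. top_two ((n + c) div A) = None} \<inter> {a..<a + M})
    \<le> A * (((M div A + 2) div 3 ^ r + 2) * 2 ^ r)"
proof -
  define u where "u = (a + c) div A"
  let ?Q = "{q \<in> {u..<u + (M div A + 2)}. top_two q = None}"
  have "{n. top_two ((n + c) div A) = None} \<inter> {a..<a + M}
      \<subseteq> (\<lambda>(q, d). A * q + d - c) ` (?Q \<times> {..<A})"
  proof
    fix n assume n: "n \<in> {n. top_two ((n + c) div A) = None} \<inter> {a..<a + M}"
    define q where "q = (n + c) div A"
    define d where "d = (n + c) mod A"
    have "u \<le> q" unfolding u_def q_def by (rule div_le_mono) (use n in simp)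
    moreover have "q \<le> u + M div A + 1"
    proof -
      have "q \<le> (a + c + M) div A" unfolding q_def by (rule div_le_mono) (use n in simp)
      also have "\<dots> \<le> u + M div A + 1" unfolding u_def by (rule div_add_le[OF assms])
      finally show ?thesis .
    qed
    moreover have "d < A" using assms by (simp add: d_def)
    ultimately have "(q, d) \<in> ?Q \<times> {..<A}" using n by (simp add: q_def)
    moreover have "n = A * q + d - c" by (simp add: q_def d_def)
    ultimately show "n \<in> (\<lambda>(q, d). A * q + d - c) ` (?Q \<times> {..<A})" by force
  qed
  then have "card ({n. top_two ((n + c) div A) = None} \<inter> {a..<a + M}) \<le> card (?Q \<times> {..<A})"
    by (rule surj_card_le[rotated]) auto
  also have "\<dots> = card ?Q * A" by (simp add: card_cartesian_product)
  also have "\<dots> \<le> ((M div A + 2) div 3 ^ r + 2) * 2 ^ r * A"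
    using card_top_two_None_interval[of u "M div A + 2" r] by simp
  finally show ?thesis by (simp add: mult.commute)
qed

section \<open>Sets of Banach density zero\<close>

definition banach_null :: "nat set \<Rightarrow> bool" where
  "banach_null S \<longleftrightarrow> (\<forall>e>0. \<exists>M. \<forall>a m. M \<le> m \<longrightarrow> real (card (S \<inter> {a..<a + m})) \<le> e * real m)"

lemma banach_null_subset: "banach_null T \<Longrightarrow> S \<subseteq> T \<Longrightarrow> banach_null S"
  unfolding banach_null_def
  by (meson Int_mono card_mono finite_Int finite_atLeastLessThan order.refl order.trans of_nat_le_iff)

lemma banach_null_Un:
  assumes "banach_null S" "banach_null T" shows "banach_null (S \<union> T)"
  unfolding banach_null_def
proof (intro allI impI)
  fix e :: real assume "e > 0"
  then obtain M M' where
    M: "\<And>a m. M \<le> m \<Longrightarrow> real (card (S \<inter> {a..<a + m})) \<le> e / 2 * real m" and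
    M': "\<And>a m. M' \<le> m \<Longrightarrow> real (card (T \<inter> {a..<a + m})) \<le> e / 2 * real m"
    using assms unfolding banach_null_def by (meson half_gt_zero)
  have "real (card ((S \<union> T) \<inter> {a..<a + m})) \<le> e * real m" if "max M M' \<le> m" for a m
  proof -
    have "card ((S \<union> T) \<inter> {a..<a + m}) \<le> card (S \<inter> {a..<a + m}) + card (T \<inter> {a..<a + m})"
      by (simp add: Int_Un_distrib2 card_Un_le)
    moreover have "real (card (S \<inter> {a..<a + m})) \<le> e / 2 * real m"
      "real (card (T \<inter> {a..<a + m})) \<le> e / 2 * real m"
      using M M' that by auto
    ultimately show ?thesis by linarith
  qed
  then show "\<exists>M. \<forall>a m. M \<le> m \<longrightarrow> real (card ((S \<union> T) \<inter> {a..<a + m})) \<le> e * real m" by blast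
qed

lemma banach_upper_density_le:
  assumes "\<And>a m. M \<le> m \<Longrightarrow> m > 0 \<Longrightarrow> real (card (S \<inter> {a..<a + m})) / real m \<le> e"
  shows "banach_upper_density S \<le> e"
proof -
  define F where "F M = (SUP p \<in> {(a::nat, m::nat). m \<ge> M \<and> m > 0}.
        real (card (S \<inter> {fst p..<fst p + snd p})) / real (snd p))" for M
  have bdd: "bdd_above ((\<lambda>p. real (card (S \<inter> {fst p..<fst p + snd p})) / real (snd p))
      ` {(a::nat, m::nat). m \<ge> M \<and> m > 0})" for M
  proof (rule bdd_aboveI2)
    fix p :: "nat \<times> nat"
    have "card (S \<inter> {fst p..<fst p + snd p}) \<le> card {fst p..<fst p + snd p}"
      by (rule card_mono) auto
    then show "real (card (S \<inter> {fst p..<fst p + snd p})) / real (snd p) \<le> 1"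
      by (cases "snd p = 0") (auto simp: divide_le_eq)
  qed
  have "0 \<le> F M" for M
    unfolding F_def by (rule cSUP_upper2[OF bdd, of "(0, Suc M)"]) auto
  then have "banach_upper_density S \<le> F M"
    unfolding banach_upper_density_def F_def[symmetric]
    by (intro cINF_lower bdd_belowI2) auto
  also have "F M \<le> e"
    unfolding F_def by (rule cSUP_least) (use assms in \<open>auto intro!: exI[of _ "Suc M"]\<close>)
  finally show ?thesis .
qed

lemma banach_null_imp_density_le_0:
  assumes "banach_null S" shows "banach_upper_density S \<le> 0"
proof (rule field_le_epsilon)
  fix e :: real assume "e > 0"
  then obtain M where M: "\<And>a m. M \<le> m \<Longrightarrow> real (card (S \<inter> {a..<a + m})) \<le> e * real m"
    using assms unfolding banach_null_def by blast
  show "banach_upper_density S \<le> 0 + e"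
    by (rule banach_upper_density_le[of M]) (use M in \<open>simp add: divide_le_eq\<close>)
qed

lemma card_top_two_None_blocks_bound:
  assumes "A > 0"
  shows "real (card ({n. top_two ((n + c) div A) = None} \<inter> {a..<a + m}))
    \<le> real m * (2/3) ^ r + 4 * real A * 2 ^ r"
proof -
  define B where "B = (m div A + 2) div 3 ^ r"
  have "A * (B * 3 ^ r) \<le> A * (m div A + 2)"
    unfolding B_def by (intro mult_le_mono2 div_times_less_eq_dividend)
  also have "\<dots> \<le> m + 2 * A" by simp
  finally have "real (A * (B * 3 ^ r)) \<le> real (m + 2 * A)"
    by (simp only: of_nat_le_iff)
  then have "real A * B * 3 ^ r \<le> real m + 2 * real A" by simp
  then have "real A * B * 3 ^ r * (2/3) ^ r \<le> (real m + 2 * real A) * (2/3) ^ r"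
    by (rule mult_right_mono) simp
  then have "real A * B * 2 ^ r \<le> (real m + 2 * real A) * (2/3) ^ r"
    by (simp add: power_divide)
  also have "\<dots> = real m * (2/3) ^ r + 2 * real A * (2/3) ^ r" by (simp add: algebra_simps)
  also have "\<dots> \<le> real m * (2/3) ^ r + 2 * real A * 2 ^ r"
  proof -
    have "(2/3::real) ^ r \<le> 2 ^ r" by (rule order_trans[OF power_le_one one_le_power]) auto
    then show ?thesis by (intro add_left_mono mult_left_mono) auto
  qed
  finally have "real A * B * 2 ^ r \<le> real m * (2/3) ^ r + 2 * real A * 2 ^ r" .
  moreover have "real (card ({n. top_two ((n + c) div A) = None} \<inter> {a..<a + m}))
      \<le> real (A * ((B + 2) * 2 ^ r))"
    using card_top_two_None_blocks[OF assms, of c a m r] unfolding B_def of_nat_le_iff .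
  moreover have "real (A * ((B + 2) * 2 ^ r)) = real A * B * 2 ^ r + 2 * real A * 2 ^ r"
    by (simp add: algebra_simps)
  ultimately show ?thesis by linarith
qed

lemma banach_null_cantor_blocks:
  assumes "A > 0" shows "banach_null {n. top_two ((n + c) div A) = None}"
  unfolding banach_null_def
proof (intro allI impI)
  fix e :: real assume "e > 0"
  then obtain r where r: "(2/3::real) ^ r < e / 2"
    using real_arch_pow_inv[of "e/2" "2/3"] by auto
  have "real (card ({n. top_two ((n + c) div A) = None} \<inter> {a..<a + m})) \<le> e * real m"
    if "8 * A * 2 ^ r / e \<le> m" for a m
  proof -
    have "real m * (2/3) ^ r \<le> real m * (e / 2)" using r by (intro mult_left_mono) auto
    then have "real m * (2/3) ^ r \<le> e * real m / 2" by (simp add: mult.commute)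
    moreover have "4 * real A * 2 ^ r \<le> e * real m / 2"
      using that \<open>e > 0\<close> by (simp add: field_simps)
    ultimately show ?thesis
      using card_top_two_None_blocks_bound[OF assms, of c a m r] by linarith
  qed
  then show "\<exists>M. \<forall>a m. M \<le> m \<longrightarrow>
      real (card ({n. top_two ((n + c) div A) = None} \<inter> {a..<a + m})) \<le> e * real m"
    by (intro exI[of _ "nat \<lceil>8 * A * 2 ^ r / e\<rceil>"]) simp
qed

section \<open>Recurrent points that are not Banach recurrent\<close>

definition level_bit :: "(nat \<Rightarrow> bool) \<Rightarrow> nat \<Rightarrow> nat" where
  "level_bit z m = (if odd m \<and> z (fst (prod_decode (m div 2))) then 1 else 0)"

definition block_len :: "nat list \<Rightarrow> nat" where
  "block_len w = 2 * length w + 2"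

definition toeplitz_point :: "nat list \<Rightarrow> (nat \<Rightarrow> bool) \<Rightarrow> nat \<Rightarrow> nat" where
  "toeplitz_point w z p = (case top_two (p div block_len w) of
      None \<Rightarrow> if p mod block_len w < length w then w ! (p mod block_len w) else 0
    | Some h \<Rightarrow> if odd p then 1 else level_bit z (floor_log h))"

lemma block_len_pos: "block_len w > 0"
  by (simp add: block_len_def)

lemma toeplitz_point_in_shift_space:
  assumes "set w \<subseteq> {..<k}" "k \<ge> 2" shows "toeplitz_point w z \<in> shift_space k"
proof -
  have "toeplitz_point w z p < k" for p
  proof (cases "top_two (p div block_len w)")
    case None
    then show ?thesis
      using assms nth_mem[of "p mod block_len w" w] by (auto simp: toeplitz_point_def subset_iff)
  qed (use assms in \<open>auto simp: toeplitz_point_def level_bit_def\<close>)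
  then show ?thesis by (simp add: shift_space_def)
qed

lemma toeplitz_point_prefix: "p < length w \<Longrightarrow> toeplitz_point w z p = w ! p"
  by (simp add: toeplitz_point_def block_len_def)

lemma toeplitz_point_periodic:
  assumes "p < block_len w * 3 ^ j"
  shows "toeplitz_point w z (p + block_len w * 3 ^ j) = toeplitz_point w z p"
proof -
  let ?A = "block_len w"
  have "p div ?A < 3 ^ j"
    using assms by (simp add: block_len_pos less_mult_imp_div_less mult.commute)
  moreover have "(p + ?A * 3 ^ j) div ?A = 1 * 3 ^ j + p div ?A"
    using block_len_pos[of w] by simp
  ultimately have top: "top_two ((p + ?A * 3 ^ j) div ?A) = top_two (p div ?A)"
    using top_two_leading_digit[of "p div ?A" j 1] by simp
  have "(p + ?A * 3 ^ j) mod ?A = p mod ?A" by simp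
  moreover have "odd (p + ?A * 3 ^ j) = odd p" by (simp add: block_len_def)
  ultimately show ?thesis unfolding toeplitz_point_def top by presburger
qed

lemma toeplitz_point_Rec:
  assumes "set w \<subseteq> {..<k}" "k \<ge> 2" shows "toeplitz_point w z \<in> Rec k"
proof -
  let ?x = "toeplitz_point w z"
  have "hitting_times ?x (sball k ?x e) \<noteq> {}" if "e > 0" for e
  proof -
    obtain m where m: "1 / 2 ^ m < e" using ex_inverse_pow2_less[OF \<open>e > 0\<close>] by blast
    define n where "n = block_len w * 3 ^ m"
    have "m < 3 ^ m" using less_exp[of m] power_mono[of "2::nat" 3 m] by linarith
    also have "3 ^ m \<le> n" using block_len_pos[of w] by (simp add: n_def)
    finally have "m < n" .
    have "sdist ?x ((shift ^^ n) ?x) \<le> 1 / 2 ^ m"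
    proof (rule sdist_le_if_eq)
      fix l assume "l < m"
      then show "?x l = (shift ^^ n) ?x l"
        using toeplitz_point_periodic[of l w m z] \<open>m < n\<close> by (simp add: funpow_shift n_def)
    qed
    moreover have "(shift ^^ n) ?x \<in> shift_space k"
      using toeplitz_point_in_shift_space[OF assms] by (simp add: funpow_shift shift_space_def)
    moreover have "n \<ge> 1" using \<open>m < n\<close> by simp
    ultimately have "n \<in> hitting_times ?x (sball k ?x e)"
      using m by (simp add: hitting_times_def sball_def)
    then show ?thesis by blast
  qed
  then show ?thesis using toeplitz_point_in_shift_space[OF assms] by (simp add: Rec_def)
qed

lemma toeplitz_point_returns_in_cantor_blocks:
  "hitting_times (toeplitz_point w z) (sball k (toeplitz_point w z) (1 / 2 ^ (length w + 2)))
    \<subseteq> {n. top_two ((n + length w) div block_len w) = None}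
      \<union> {n. top_two ((n + Suc (length w)) div block_len w) = None}"
proof
  let ?x = "toeplitz_point w z"
  fix n assume "n \<in> hitting_times ?x (sball k ?x (1 / 2 ^ (length w + 2)))"
  then have "sdist ((shift ^^ 0) ?x) ((shift ^^ n) ?x) < 1 / 2 ^ (length w + 2)"
    by (simp add: hitting_times_def sball_def)
  then have agree: "?x l = ?x (l + n)" if "l < length w + 2" for l
    using sdist_less_imp_eq[OF _ that] by (simp add: funpow_shift)
  have "?x (length w) = 0" "?x (Suc (length w)) = 0"
    by (simp_all add: toeplitz_point_def block_len_def)
  then have zeros: "?x (n + length w) = 0" "?x (n + Suc (length w)) = 0"
    using agree[of "length w"] agree[of "Suc (length w)"] by (simp_all add: add.commute)
  have cantor: "top_two (p div block_len w) = None" if "odd p" "?x p = 0" for p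
    using that by (auto simp: toeplitz_point_def split: option.splits)
  show "n \<in> {n. top_two ((n + length w) div block_len w) = None}
      \<union> {n. top_two ((n + Suc (length w)) div block_len w) = None}"
  proof (cases "odd (n + length w)")
    case True
    then show ?thesis using cantor[OF True zeros(1)] by simp
  next
    case False
    then have "odd (n + Suc (length w))" by simp
    then show ?thesis using cantor[OF _ zeros(2)] by simp
  qed
qed

lemma toeplitz_point_not_BR: "toeplitz_point w z \<notin> BR k"
proof
  let ?H = "hitting_times (toeplitz_point w z) (sball k (toeplitz_point w z) (1 / 2 ^ (length w + 2)))"
  assume "toeplitz_point w z \<in> BR k"
  then have "banach_upper_density ?H > 0" by (simp add: BR_def)
  moreover have "banach_null ?H"
    using banach_null_Un[OF banach_null_cantor_blocks banach_null_cantor_blocks, OF block_len_pos block_len_pos]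
      toeplitz_point_returns_in_cantor_blocks
    by (rule banach_null_subset)
  ultimately show False using banach_null_imp_density_le_0[of ?H] by linarith
qed

section \<open>Distributional chaos\<close>

lemma liminf_ereal_eqI:
  fixes X :: "nat \<Rightarrow> real"
  assumes "\<And>n. c \<le> X n" "\<And>e N. e > 0 \<Longrightarrow> \<exists>n\<ge>N. X n \<le> c + e"
  shows "liminf (\<lambda>n. ereal (X n)) = ereal c"
proof (rule antisym)
  show "liminf (\<lambda>n. ereal (X n)) \<le> ereal c"
  proof (rule ereal_le_epsilon2)
    fix e :: real assume "0 < e"
    have "(INF m\<in>{N..}. ereal (X m)) \<le> ereal (c + e)" for N
      using assms(2)[OF \<open>0 < e\<close>, of N] by (auto intro: INF_lower2)
    then show "liminf (\<lambda>n. ereal (X n)) \<le> ereal c + ereal e"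
      unfolding liminf_SUP_INF by (simp add: SUP_least)
  qed
qed (use assms(1) in \<open>auto intro: Liminf_bounded\<close>)

lemma limsup_ereal_eqI:
  fixes X :: "nat \<Rightarrow> real"
  assumes "\<And>n. X n \<le> c" "\<And>e N. e > 0 \<Longrightarrow> \<exists>n\<ge>N. c - e \<le> X n"
  shows "limsup (\<lambda>n. ereal (X n)) = ereal c"
proof (rule antisym)
  show "ereal c \<le> limsup (\<lambda>n. ereal (X n))"
  proof (rule ereal_le_epsilon2)
    fix e :: real assume "0 < e"
    have "ereal (c - e) \<le> (SUP m\<in>{N..}. ereal (X m))" for N
      using assms(2)[OF \<open>0 < e\<close>, of N] by (auto intro: SUP_upper2)
    then have "ereal (c - e) \<le> limsup (\<lambda>n. ereal (X n))"
      unfolding limsup_INF_SUP by (rule INF_greatest)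
    then show "ereal c \<le> limsup (\<lambda>n. ereal (X n)) + ereal e"
      by (cases "limsup (\<lambda>n. ereal (X n))") auto
  qed
qed (use assms(1) in \<open>auto intro: Limsup_bounded\<close>)

lemma Phi_n_nonneg: "0 \<le> Phi_n x y n t"
  by (simp add: Phi_n_def)

lemma Phi_n_le_1: "Phi_n x y n t \<le> 1"
proof -
  have "card {i. i < n \<and> sdist ((shift ^^ i) x) ((shift ^^ i) y) < t} \<le> card {..<n}"
    by (rule card_mono) auto
  then show ?thesis by (cases "n = 0") (auto simp: Phi_n_def divide_le_eq)
qed

definition horizon :: "nat list \<Rightarrow> nat \<Rightarrow> nat" where
  "horizon w m = block_len w * 3 ^ (2 * 2 ^ m)"

definition exceptional :: "nat list \<Rightarrow> nat \<Rightarrow> nat set" where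
  "exceptional w m = {p. p div block_len w \<in> avoid_two (2 ^ m) (2 * 2 ^ m)}"

lemma exceptional_subset_horizon: "exceptional w m \<subseteq> {..<horizon w m}"
proof
  fix p assume "p \<in> exceptional w m"
  then have "p div block_len w < 3 ^ (2 * 2 ^ m)" by (simp add: exceptional_def avoid_two_def)
  then show "p \<in> {..<horizon w m}"
    by (simp add: horizon_def block_len_pos div_less_iff_less_mult mult.commute)
qed

lemma finite_exceptional [simp]: "finite (exceptional w m)"
  using exceptional_subset_horizon finite_subset by blast

lemma card_exceptional: "real (card (exceptional w m)) \<le> real (horizon w m) * (2/3) ^ 2 ^ m"
proof -
  let ?A = "block_len w" and ?j = "2 ^ m :: nat"
  have "exceptional w m \<subseteq> (\<lambda>(q, d). ?A * q + d) ` (avoid_two ?j (2 * ?j) \<times> {..<?A})"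
  proof
    fix p assume "p \<in> exceptional w m"
    then have "(p div ?A, p mod ?A) \<in> avoid_two ?j (2 * ?j) \<times> {..<?A}"
      using block_len_pos[of w] by (simp add: exceptional_def)
    then show "p \<in> (\<lambda>(q, d). ?A * q + d) ` (avoid_two ?j (2 * ?j) \<times> {..<?A})"
      by (rule rev_image_eqI) simp
  qed
  then have "card (exceptional w m) \<le> card (avoid_two ?j (2 * ?j) \<times> {..<?A})"
    by (rule surj_card_le[rotated]) simp
  also have "\<dots> \<le> 3 ^ ?j * 2 ^ ?j * ?A"
    using card_avoid_two[of ?j "2 * ?j"] by (simp add: card_cartesian_product)
  finally have "real (card (exceptional w m)) \<le> real (3 ^ ?j * 2 ^ ?j * ?A)"
    by (simp only: of_nat_le_iff)
  also have "\<dots> = real (horizon w m) * (2/3) ^ ?j"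
    by (simp add: horizon_def mult_2 power_add field_simps)
  finally show ?thesis .
qed

lemma horizon_ratio_ge_1: "1 \<le> real (horizon w m) * (2/3) ^ 2 ^ m"
proof -
  have "real (horizon w m) * (2/3) ^ 2 ^ m = real (block_len w) * 3 ^ 2 ^ m * 2 ^ 2 ^ m"
    by (simp add: horizon_def mult_2 power_add field_simps)
  moreover have "1 * 1 * 1 \<le> real (block_len w) * 3 ^ 2 ^ m * 2 ^ 2 ^ m"
    using block_len_pos[of w] by (intro mult_mono) auto
  ultimately show ?thesis by simp
qed

lemma toeplitz_point_off_exceptional:
  assumes "p < horizon w m" "p \<notin> exceptional w m"
  shows "toeplitz_point w z p = (if odd p then 1 else level_bit z m)"
proof -
  have "p div block_len w < 3 ^ (2 * 2 ^ m)"
    using assms(1) by (simp add: horizon_def block_len_pos div_less_iff_less_mult mult.commute)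
  then obtain h where h: "top_two (p div block_len w) = Some h" "2 ^ m \<le> h" "h < 2 * 2 ^ m"
    using assms(2) by (auto simp: exceptional_def avoid_two_def)
  then have "floor_log h = m" by (intro floor_log_eqI) auto
  then show ?thesis using h by (simp add: toeplitz_point_def)
qed

lemma close_times_subset_exceptional:
  assumes "level_bit z m \<noteq> level_bit z' m"
  shows "{i. i < horizon w m \<and>
      sdist ((shift ^^ i) (toeplitz_point w z)) ((shift ^^ i) (toeplitz_point w z')) < 1/4}
    \<subseteq> exceptional w m \<union> (\<lambda>p. p - 1) ` exceptional w m \<union> {horizon w m - 1}"
proof
  let ?x = "toeplitz_point w z" and ?y = "toeplitz_point w z'" and ?E = "exceptional w m"
  have even_agree: "p \<in> ?E" if "p < horizon w m" "even p" "?x p = ?y p" for p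
  proof (rule ccontr)
    assume "p \<notin> ?E"
    then have "?x p = level_bit z m" "?y p = level_bit z' m"
      using toeplitz_point_off_exceptional[OF that(1)] that(2) by simp_all
    then show False using assms that(3) by simp
  qed
  fix i assume i: "i \<in> {i. i < horizon w m \<and> sdist ((shift ^^ i) ?x) ((shift ^^ i) ?y) < 1/4}"
  \<comment> \<open>the two points agree at i and Suc i, and one of these positions is even\<close>
  then have "?x (l + i) = ?y (l + i)" if "l < 2" for l
    using sdist_funpow_shift_less_imp_eq[of i ?x ?y 2 l] that by simp
  from this[of 0] this[of 1] have "?x i = ?y i" "?x (Suc i) = ?y (Suc i)" by simp_all
  show "i \<in> ?E \<union> (\<lambda>p. p - 1) ` ?E \<union> {horizon w m - 1}"
  proof (cases "even i")
    case True
    then show ?thesis using i even_agree[of i] \<open>?x i = ?y i\<close> by simp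
  next
    case odd: False
    show ?thesis
    proof (cases "Suc i < horizon w m")
      case True
      then have "Suc i \<in> ?E" using even_agree odd \<open>?x (Suc i) = ?y (Suc i)\<close> by simp
      then have "i \<in> (\<lambda>p. p - 1) ` ?E" by (rule rev_image_eqI) simp
      then show ?thesis by blast
    next
      case False
      moreover have "i < horizon w m" using i by simp
      ultimately have "i = horizon w m - 1" by linarith
      then show ?thesis by blast
    qed
  qed
qed

lemma far_times_subset_exceptional:
  assumes "level_bit z m = level_bit z' m" "1 / 2 ^ L < t"
  shows "{i. i < horizon w m \<and>
      \<not> sdist ((shift ^^ i) (toeplitz_point w z)) ((shift ^^ i) (toeplitz_point w z')) < t}
    \<subseteq> (\<Union>l<L. (\<lambda>p. p - l) ` exceptional w m) \<union> {horizon w m - L..<horizon w m}"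
proof
  let ?x = "toeplitz_point w z" and ?y = "toeplitz_point w z'"
  fix i assume i: "i \<in> {i. i < horizon w m \<and> \<not> sdist ((shift ^^ i) ?x) ((shift ^^ i) ?y) < t}"
  have "\<not> (\<forall>l<L. ?x (l + i) = ?y (l + i))"
  proof
    assume "\<forall>l<L. ?x (l + i) = ?y (l + i)"
    then have "sdist ((shift ^^ i) ?x) ((shift ^^ i) ?y) \<le> 1 / 2 ^ L"
      by (intro sdist_funpow_shift_le_if_eq) simp
    then show False using i assms(2) by simp
  qed
  then obtain l where l: "l < L" "?x (l + i) \<noteq> ?y (l + i)" by blast
  show "i \<in> (\<Union>l<L. (\<lambda>p. p - l) ` exceptional w m) \<union> {horizon w m - L..<horizon w m}"
  proof (cases "l + i < horizon w m")
    case True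
    have "l + i \<in> exceptional w m"
    proof (rule ccontr)
      assume "l + i \<notin> exceptional w m"
      then have "?x (l + i) = ?y (l + i)"
        using toeplitz_point_off_exceptional[OF True, where z = z]
          toeplitz_point_off_exceptional[OF True, where z = z'] assms(1) by simp
      then show False using l(2) by contradiction
    qed
    then have "i \<in> (\<lambda>p. p - l) ` exceptional w m" by (rule rev_image_eqI) simp
    then show ?thesis using l(1) by blast
  qed (use i l(1) in auto)
qed

lemma Phi_n_horizon_le:
  assumes "level_bit z m \<noteq> level_bit z' m"
  shows "Phi_n (toeplitz_point w z) (toeplitz_point w z') (horizon w m) (1/4) \<le> 3 * (2/3) ^ 2 ^ m"
proof -
  let ?E = "exceptional w m" and ?n = "horizon w m"
  let ?G = "{i. i < ?n \<and>
      sdist ((shift ^^ i) (toeplitz_point w z)) ((shift ^^ i) (toeplitz_point w z')) < 1/4}"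
  have "card ?G \<le> card (?E \<union> (\<lambda>p. p - 1) ` ?E \<union> {?n - 1})"
    by (rule card_mono[OF _ close_times_subset_exceptional[OF assms]]) simp
  also have "\<dots> \<le> card (?E \<union> (\<lambda>p. p - 1) ` ?E) + 1"
    using card_Un_le[of "?E \<union> (\<lambda>p. p - 1) ` ?E" "{?n - 1}"] by simp
  also have "\<dots> \<le> card ?E + card ((\<lambda>p. p - 1) ` ?E) + 1"
    using card_Un_le[of ?E "(\<lambda>p. p - 1) ` ?E"] by simp
  also have "\<dots> \<le> 2 * card ?E + 1" using card_image_le[of ?E "\<lambda>p. p - 1"] by simp
  finally have "real (card ?G) \<le> 2 * real (card ?E) + 1" by linarith
  also have "\<dots> \<le> 3 * (real ?n * (2/3) ^ 2 ^ m)"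
    using card_exceptional[of w m] horizon_ratio_ge_1[of w m] by linarith
  finally have "real (card ?G) / real ?n \<le> 3 * (2/3) ^ 2 ^ m"
    using block_len_pos[of w] by (simp add: divide_le_eq horizon_def mult_ac)
  then show ?thesis by (simp add: Phi_n_def)
qed

lemma card_far_times_le:
  assumes "level_bit z m = level_bit z' m" "1 / 2 ^ L < t"
  shows "real (card {i. i < horizon w m \<and>
      \<not> sdist ((shift ^^ i) (toeplitz_point w z)) ((shift ^^ i) (toeplitz_point w z')) < t})
    \<le> 2 * real L * (2/3) ^ 2 ^ m * real (horizon w m)"
proof -
  let ?E = "exceptional w m" and ?n = "horizon w m"
  let ?B = "{i. i < ?n \<and>
      \<not> sdist ((shift ^^ i) (toeplitz_point w z)) ((shift ^^ i) (toeplitz_point w z')) < t}"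
  have "card ?B \<le> card ((\<Union>l<L. (\<lambda>p. p - l) ` ?E) \<union> {?n - L..<?n})"
    by (rule card_mono[OF _ far_times_subset_exceptional[OF assms]]) simp
  also have "\<dots> \<le> card (\<Union>l<L. (\<lambda>p. p - l) ` ?E) + card {?n - L..<?n}"
    by (rule card_Un_le)
  also have "\<dots> \<le> (\<Sum>l<L. card ((\<lambda>p. p - l) ` ?E)) + L"
    using card_UN_le[of "{..<L}" "\<lambda>l. (\<lambda>p. p - l) ` ?E"] by simp
  also have "\<dots> \<le> (\<Sum>l<L. card ?E) + L"
    by (intro add_mono sum_mono card_image_le) simp_all
  also have "\<dots> = L * card ?E + L" by simp
  finally have "real (card ?B) \<le> real (L * card ?E + L)" by (simp only: of_nat_le_iff)
  also have "\<dots> = real L * real (card ?E) + real L" by simp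
  also have "\<dots> \<le> real L * (real ?n * (2/3) ^ 2 ^ m) + real L * (real ?n * (2/3) ^ 2 ^ m)"
  proof (rule add_mono)
    show "real L * real (card ?E) \<le> real L * (real ?n * (2/3) ^ 2 ^ m)"
      using card_exceptional[of w m] by (intro mult_left_mono) auto
    show "real L \<le> real L * (real ?n * (2/3) ^ 2 ^ m)"
      using horizon_ratio_ge_1[of w m] mult_left_mono[of 1 _ "real L"] by simp
  qed
  finally show ?thesis by (simp add: algebra_simps)
qed

lemma Phi_n_horizon_ge:
  assumes "level_bit z m = level_bit z' m" "1 / 2 ^ L < t"
  shows "1 - 2 * real L * (2/3) ^ 2 ^ m \<le> Phi_n (toeplitz_point w z) (toeplitz_point w z') (horizon w m) t"
proof -
  let ?n = "horizon w m"
    and ?d = "\<lambda>i. sdist ((shift ^^ i) (toeplitz_point w z)) ((shift ^^ i) (toeplitz_point w z'))"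
  let ?G = "{i. i < ?n \<and> ?d i < t}" and ?B = "{i. i < ?n \<and> \<not> ?d i < t}"
  have "?G \<union> ?B = {..<?n}" "?G \<inter> ?B = {}" "finite ?G" "finite ?B" by auto
  then have "card ?G + card ?B = ?n" using card_Un_disjoint[of ?G ?B] by simp
  then have "(1 - 2 * real L * (2/3) ^ 2 ^ m) * real ?n \<le> real (card ?G)"
    using card_far_times_le[OF assms, of w] by (simp add: algebra_simps flip: of_nat_add)
  then show ?thesis
    using block_len_pos[of w] by (simp add: Phi_n_def le_divide_eq horizon_def)
qed

lemma level_bit_odd: "level_bit z (Suc (2 * prod_encode (i, R))) = (if z i then 1 else 0)"
  by (simp add: level_bit_def)

lemma level_bit_even: "level_bit z (2 * m) = 0"
  by (simp add: level_bit_def)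

lemma le_horizon: "m \<le> horizon w m"
proof -
  have "m < 2 ^ 2 ^ m" using less_exp[of m] less_exp[of "2 ^ m"] by linarith
  also have "(2::nat) ^ 2 ^ m \<le> 3 ^ 2 ^ m" by (rule power_mono) auto
  also have "(3::nat) ^ 2 ^ m \<le> 3 ^ (2 * 2 ^ m)" by (rule power_increasing) auto
  also have "\<dots> \<le> horizon w m" using block_len_pos[of w] by (simp add: horizon_def)
  finally show ?thesis by simp
qed

lemma two_thirds_pow_pow_le:
  assumes "r \<le> m" shows "(2/3::real) ^ 2 ^ m \<le> (2/3) ^ r"
proof -
  have "r \<le> 2 ^ m" using assms less_exp[of m] by linarith
  then show ?thesis by (rule power_decreasing) auto
qed

lemma Phi_lower_toeplitz_point:
  assumes "z \<noteq> z'" shows "Phi_lower (toeplitz_point w z) (toeplitz_point w z') (1/4) = 0"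
proof -
  obtain i where i: "z i \<noteq> z' i" using assms by blast
  have often_small: "\<exists>n\<ge>N. Phi_n (toeplitz_point w z) (toeplitz_point w z') n (1/4) \<le> 0 + e"
    if "e > 0" for e N
  proof -
    obtain r where r: "(2/3::real) ^ r < e / 3" using real_arch_pow_inv[of "e/3" "2/3"] \<open>e > 0\<close> by auto
    define m where "m = Suc (2 * prod_encode (i, max N r))"
    have "max N r \<le> m" using le_prod_encode_2[of "max N r" i] by (simp add: m_def)
    have "level_bit z m \<noteq> level_bit z' m" using i by (simp add: m_def level_bit_odd)
    then have "Phi_n (toeplitz_point w z) (toeplitz_point w z') (horizon w m) (1/4) \<le> 3 * (2/3) ^ 2 ^ m"
      by (rule Phi_n_horizon_le)
    also have "\<dots> \<le> e"
      using two_thirds_pow_pow_le[of r m] \<open>max N r \<le> m\<close> r by linarith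
    finally show ?thesis
      using le_horizon[of m w] \<open>max N r \<le> m\<close> by (intro exI[of _ "horizon w m"]) simp
  qed
  show ?thesis
    unfolding Phi_lower_def zero_ereal_def
    by (rule liminf_ereal_eqI[where X = "\<lambda>n. Phi_n _ _ n _", OF Phi_n_nonneg often_small])
qed

lemma Phi_upper_toeplitz_point:
  assumes "t > 0" shows "Phi_upper (toeplitz_point w z) (toeplitz_point w z') t = 1"
proof -
  obtain L where L: "1 / 2 ^ L < t" using ex_inverse_pow2_less[OF assms] by blast
  have often_large: "\<exists>n\<ge>N. 1 - e \<le> Phi_n (toeplitz_point w z) (toeplitz_point w z') n t"
    if "e > 0" for e N
  proof -
    obtain r where r: "(2/3::real) ^ r < e / (2 * L + 1)"
      using real_arch_pow_inv[of "e / (2 * L + 1)" "2/3"] \<open>e > 0\<close> by auto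
    define m where "m = 2 * max N r"
    have "max N r \<le> m" by (simp add: m_def max_def)
    have "2 * real L * (2/3::real) ^ 2 ^ m \<le> (2 * real L + 1) * (2/3) ^ r"
      using two_thirds_pow_pow_le[of r m] \<open>max N r \<le> m\<close> by (intro mult_mono) auto
    also have "\<dots> \<le> e" using r by (simp add: field_simps)
    finally have "1 - e \<le> 1 - 2 * real L * (2/3) ^ 2 ^ m" by simp
    also have "\<dots> \<le> Phi_n (toeplitz_point w z) (toeplitz_point w z') (horizon w m) t"
      by (rule Phi_n_horizon_ge[OF _ L]) (simp add: m_def level_bit_even)
    finally show ?thesis
      using le_horizon[of m w] \<open>max N r \<le> m\<close> by (intro exI[of _ "horizon w m"]) simp
  qed
  show ?thesis
    unfolding Phi_upper_def one_ereal_def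
    by (rule limsup_ereal_eqI[where X = "\<lambda>n. Phi_n _ _ n _", OF Phi_n_le_1 often_large])
qed

lemma DC1_pair_toeplitz_point: "z \<noteq> z' \<Longrightarrow> DC1_pair (toeplitz_point w z) (toeplitz_point w z')"
  unfolding DC1_pair_def
  using Phi_lower_toeplitz_point Phi_upper_toeplitz_point by (intro conjI exI[of _ "1/4"]) auto

lemma inj_toeplitz_point: "inj (toeplitz_point w)"
proof (rule injI, rule ccontr)
  fix z z' assume "toeplitz_point w z = toeplitz_point w z'" "z \<noteq> z'"
  then obtain i where i: "z i \<noteq> z' i" by blast
  define m where "m = Suc (2 * prod_encode (i, 0))"
  define p where "p = block_len w * (2 * 3 ^ 2 ^ m)"
  have "top_two (p div block_len w) = Some (2 ^ m)"
    using top_two_leading_digit[of 0 "2 ^ m" 2] block_len_pos[of w] by (simp add: p_def)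
  moreover have "even p" by (simp add: p_def block_len_def)
  ultimately have "toeplitz_point w y p = level_bit y m" for y
    by (simp add: toeplitz_point_def)
  then have "level_bit z m = level_bit z' m"
    using \<open>toeplitz_point w z = toeplitz_point w z'\<close> by metis
  then show False using i by (simp add: m_def level_bit_odd split: if_splits)
qed

lemma uncountable_UNIV_nat_bool: "uncountable (UNIV :: (nat \<Rightarrow> bool) set)"
proof
  assume "countable (UNIV :: (nat \<Rightarrow> bool) set)"
  then obtain f :: "nat \<Rightarrow> nat \<Rightarrow> bool" where "range f = UNIV"
    using uncountable_def by blast
  then obtain i where "f i = (\<lambda>n. \<not> f n n)" by (metis UNIV_I imageE)
  then have "f i i = (\<not> f i i)" by metis
  then show False by simp
qed

lemma toeplitz_point_Rec_minus_BR:
  "set w \<subseteq> {..<k} \<Longrightarrow> k \<ge> 2 \<Longrightarrow> toeplitz_point w z \<in> Rec k - BR k"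
  using toeplitz_point_Rec toeplitz_point_not_BR by blast

lemma DC1_scrambled_range_toeplitz_point: "DC1_scrambled (range (toeplitz_point w))"
proof -
  have "toeplitz_point w (\<lambda>_. False) \<noteq> toeplitz_point w (\<lambda>_. True)"
  proof
    assume "toeplitz_point w (\<lambda>_. False) = toeplitz_point w (\<lambda>_. True)"
    then have "(\<lambda>_::nat. False) = (\<lambda>_. True)" by (rule injD[OF inj_toeplitz_point])
    then show False by (simp add: fun_eq_iff)
  qed
  then have "\<exists>x\<in>range (toeplitz_point w). \<exists>y\<in>range (toeplitz_point w). x \<noteq> y" by blast
  moreover have "DC1_pair x y" if "x \<in> range (toeplitz_point w)" "y \<in> range (toeplitz_point w)" "x \<noteq> y" for x y
    using that by (auto intro!: DC1_pair_toeplitz_point)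
  ultimately show ?thesis by (simp add: DC1_scrambled_def)
qed

theorem theoremA:
  fixes k :: nat
  assumes "k \<ge> 2"
  shows "(\<forall>x\<in>shift_space k. \<forall>e>0. \<exists>y\<in>Rec k - BR k. sdist x y < e)
       \<and> (\<exists>S. S \<subseteq> Rec k - BR k \<and> uncountable S \<and> DC1_scrambled S)"
proof (intro conjI ballI allI impI)
  fix x and e :: real assume "x \<in> shift_space k" "e > 0"
  obtain m where m: "1 / 2 ^ m < e" using ex_inverse_pow2_less[OF \<open>e > 0\<close>] by blast
  define y where "y = toeplitz_point (map x [0..<m]) (\<lambda>_. False)"
  have "y \<in> Rec k - BR k"
    unfolding y_def using \<open>x \<in> shift_space k\<close> assms
    by (intro toeplitz_point_Rec_minus_BR) (auto simp: shift_space_def)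
  moreover have "sdist x y \<le> 1 / 2 ^ m"
    by (rule sdist_le_if_eq) (simp add: y_def toeplitz_point_prefix)
  ultimately show "\<exists>y\<in>Rec k - BR k. sdist x y < e" using m by force
next
  have "range (toeplitz_point []) \<subseteq> Rec k - BR k"
    using toeplitz_point_Rec_minus_BR[of "[]" k] assms by auto
  moreover have "uncountable (range (toeplitz_point []))"
    using uncountable_UNIV_nat_bool countable_image_inj_on[OF _ inj_toeplitz_point] by blast
  ultimately show "\<exists>S. S \<subseteq> Rec k - BR k \<and> uncountable S \<and> DC1_scrambled S"
    using DC1_scrambled_range_toeplitz_point by blast
qed

end
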